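(* Let $a,b$ be positive integers, $d=\gcd(a,b)$, and suppose $a/d$ and $b/d$ are odd. Let $\alpha,\beta,\alpha',\beta'\in\mathbb{N}_0$ satisfy $d=\alpha a-\beta b$ and $-d=\alpha'a-\beta'b$, with $\alpha+\beta$ least possible and $\alpha'+\beta'$ least possible among such solutions. Then both $\alpha+\beta$ and $\alpha'+\beta'$ are odd, i.e. $E_{(-b,a)}^{(\infty,\infty)}$ is of case $(4')$.
   Context: $E_{(-b,a)}^{(\infty,\infty)}$ is the $\mathbb{Z}$-grading on the Grassmann algebra of an infinite-dimensional space with basis $e_1,e_2,\dots$ in which the basis is split into two infinite sets whose elements have degrees $-b$ and $a$ respectively (monomials get the sum of degrees). It is said to be of case $(4')$ when the minimal sums $\alpha+\beta$ and $\alpha'+\beta'$ defined in the claim are both odd. *)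

theory Defs
  imports Main
begin

definition is_min_sol :: "nat \<Rightarrow> nat \<Rightarrow> int \<Rightarrow> nat \<Rightarrow> nat \<Rightarrow> bool" where
  "is_min_sol a b c x y \<longleftrightarrow>
     int x * int a - int y * int b = c \<and>
     (\<forall>x' y'. int x' * int a - int y' * int b = c \<longrightarrow> x + y \<le> x' + y')"

definition case_4' :: "nat \<Rightarrow> nat \<Rightarrow> nat \<Rightarrow> nat \<Rightarrow> bool" where
  "case_4' \<alpha> \<beta> \<alpha>' \<beta>' \<longleftrightarrow> odd (\<alpha> + \<beta>) \<and> odd (\<alpha>' + \<beta>')"

end

theory Submission
  imports Defs
begin

(* Dividing x a - y b = \<plusminus>d by d gives x (a/d) - y (b/d) = \<plusminus>1, and as a/d and b/d are
   odd, x - y and hence x + y is odd. This holds for every solution. *)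

lemma odd_add_if_odd_diff_mult_odd:
  fixes x y a b :: int
  assumes "odd a" and "odd b" and "odd (x * a - y * b)"
  shows "odd (x + y)"
  using assms by simp

lemma odd_add_if_diff_mult_eq_pm_gcd:
  fixes a b x y :: nat
  assumes "0 < a"
    and "odd (a div gcd a b)" and "odd (b div gcd a b)"
    and eq: "int x * int a - int y * int b = c"
    and c: "c = int (gcd a b) \<or> c = - int (gcd a b)"
  shows "odd (x + y)"
proof -
  define d where "d = gcd a b"
  have "0 < d" using \<open>0 < a\<close> by (simp add: d_def)
  obtain a' where a: "a = d * a'"
    unfolding d_def by (metis dvdE gcd_dvd1)
  obtain b' where b: "b = d * b'"
    unfolding d_def by (metis dvdE gcd_dvd2)
  have "int d * (int x * int a' - int y * int b') = int d * (if c = int d then 1 else - 1)"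
    using eq c a b \<open>0 < d\<close> unfolding d_def[symmetric] by (auto simp: algebra_simps)
  then have "odd (int x * int a' - int y * int b')"
    using \<open>0 < d\<close> by (simp split: if_splits)
  moreover have "odd (int a')" and "odd (int b')"
    using assms(2,3) a b \<open>0 < d\<close> unfolding d_def[symmetric] by simp_all
  ultimately have "odd (int x + int y)"
    using odd_add_if_odd_diff_mult_odd by blast
  then show ?thesis by simp
qed

theorem lemma4p12:
  fixes a b d \<alpha> \<beta> \<alpha>' \<beta>' :: nat
  assumes "0 < a" and "0 < b"
    and "d = gcd a b"
    and "odd (a div d)" and "odd (b div d)"
    and "is_min_sol a b (int d) \<alpha> \<beta>"
    and "is_min_sol a b (- int d) \<alpha>' \<beta>'"
  shows "case_4' \<alpha> \<beta> \<alpha>' \<beta>'"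
  using odd_add_if_diff_mult_eq_pm_gcd[OF \<open>0 < a\<close>] assms(3-7)
  unfolding case_4'_def is_min_sol_def by blast

end
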